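(* Let $\lambda>0$, let $\mathcal{Y}$, $g$ be as in the context (with $\mu$ and $K(y,y)$ continuous), and let $(y_1^*,y_2^* )\in\operatorname*{argmax}_{(y_1,y_2)\in\mathcal{Y}\times\mathcal{Y}}\mathrm{EUBO}(y_1,y_2)$. Then $$V_\lambda(y_1^*,y_2^* )\;\ge\;\max_{(y_1,y_2)\in\mathcal{Y}\times\mathcal{Y}}V_0(y_1,y_2)-\lambda C,\qquad C=\frac{e^{-1/2}}{\sqrt{2}}.$$
   Context: Let $\mathcal{Y}\subseteq\mathbb{R}^k$ be compact. Let $g$ be a random function on $\mathbb{R}^k$ distributed as a Gaussian process with mean function $\mu:\mathbb{R}^k\to\mathbb{R}$ and covariance function $K:\mathbb{R}^k\times\mathbb{R}^k\to\mathbb{R}$; all probabilities and expectations $\mathbb{P},\mathbb{E}$ are with respect to the law of $g$ and of the response below. For a query $(y_1,y_2)\in\mathbb{R}^k\times\mathbb{R}^k$ and noise level $\lambda\ge 0$, the response $r(y_1,y_2)\in\{1,2\}$ is a random variable with: if $\lambda>0$, $\mathbb{P}(r(y_1,y_2)=1\mid g)=\Phi\big((g(y_1)-g(y_2))/(\sqrt{2}\lambda)\big)$ and $\mathbb{P}(r(y_1,y_2)=2\mid g)=1-\mathbb{P}(r(y_1,y_2)=1\mid g)$; if $\lambda=0$, $r(y_1,y_2)=1$ when $g(y_1)>g(y_2)$ and $r(y_1,y_2)=2$ when $g(y_1)<g(y_2)$ (ties broken arbitrarily). Here $\Phi$ is the standard normal CDF. Define $\mathrm{EUBO}(y_1,y_2)=\mathbb{E}[\max\{g(y_1),g(y_2)\}]$.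 Define $$W_\lambda(y_1,y_2)=\mathbb{E}\Big[\max_{y\in\mathcal{Y}}\mathbb{E}[g(y)\mid r(y_1,y_2)]\Big]=\sum_{i\in\{1,2\}:\,\mathbb{P}(r(y_1,y_2)=i)>0}\mathbb{P}(r(y_1,y_2)=i)\max_{y\in\mathcal{Y}}\mathbb{E}[g(y)\mid r(y_1,y_2)=i],$$ and $V_\lambda(y_1,y_2)=W_\lambda(y_1,y_2)-\max_{y\in\mathcal{Y}}\mathbb{E}[g(y)]$. It is assumed that all maxima over $\mathcal{Y}$ of (conditional) posterior means appearing here are attained. *)

theory Defs
  imports "HOL-Probability.Probability"
begin

definition gaussian_rv :: "'a measure \<Rightarrow> ('a \<Rightarrow> real) \<Rightarrow> real \<Rightarrow> real \<Rightarrow> bool" where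
  "gaussian_rv M X m v \<longleftrightarrow>
     X \<in> borel_measurable M \<and>
     (if v = 0 then (AE \<omega> in M. X \<omega> = m)
      else v > 0 \<and> distributed M lborel X (\<lambda>x. ennreal (normal_density m (sqrt v) x)))"

definition gaussian_process ::
  "'a measure \<Rightarrow> ('a \<Rightarrow> real^'k \<Rightarrow> real) \<Rightarrow> (real^'k \<Rightarrow> real) \<Rightarrow> (real^'k \<Rightarrow> real^'k \<Rightarrow> real) \<Rightarrow> bool"
where
  "gaussian_process M G mu K \<longleftrightarrow>
     prob_space M \<and>
     (\<forall>S (c :: real^'k \<Rightarrow> real). finite S \<longrightarrow>
        gaussian_rv M (\<lambda>\<omega>. \<Sum>x\<in>S. c x * G \<omega> x)
          (\<Sum>x\<in>S. c x * mu x)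
          (\<Sum>x\<in>S. \<Sum>x'\<in>S. c x * c x' * K x x'))"

definition Phi :: "real \<Rightarrow> real" where
  "Phi x = (\<integral>t. indicator {..x} t * std_normal_density t \<partial>lborel)"

text \<open>Conditional probability P(r(y1,y2) = i | g), as a function of the sample point;
  for lambda = 0, ties g(y1) = g(y2) are broken as response 2.\<close>
definition resp_prob :: "('a \<Rightarrow> real^'k \<Rightarrow> real) \<Rightarrow> real \<Rightarrow> real^'k \<Rightarrow> real^'k \<Rightarrow> nat \<Rightarrow> 'a \<Rightarrow> real" where
  "resp_prob G lam y1 y2 i \<omega> =
     (let p1 = (if lam > 0 then Phi ((G \<omega> y1 - G \<omega> y2) / (sqrt 2 * lam))
                else (if G \<omega> y1 > G \<omega> y2 then 1 else 0))
      in if i = 1 then p1 else 1 - p1)"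

definition P_resp :: "'a measure \<Rightarrow> ('a \<Rightarrow> real^'k \<Rightarrow> real) \<Rightarrow> real \<Rightarrow> real^'k \<Rightarrow> real^'k \<Rightarrow> nat \<Rightarrow> real" where
  "P_resp M G lam y1 y2 i = (\<integral>\<omega>. resp_prob G lam y1 y2 i \<omega> \<partial>M)"

text \<open>E[g(y) | r(y1,y2) = i] = E[g(y) 1{r=i}] / P(r=i) = E[g(y) P(r=i|g)] / P(r=i).\<close>
definition post_mean :: "'a measure \<Rightarrow> ('a \<Rightarrow> real^'k \<Rightarrow> real) \<Rightarrow> real \<Rightarrow> real^'k \<Rightarrow> real^'k \<Rightarrow> nat \<Rightarrow> real^'k \<Rightarrow> real" where
  "post_mean M G lam y1 y2 i y =
     (\<integral>\<omega>. G \<omega> y * resp_prob G lam y1 y2 i \<omega> \<partial>M) / P_resp M G lam y1 y2 i"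

definition EUBO :: "'a measure \<Rightarrow> ('a \<Rightarrow> real^'k \<Rightarrow> real) \<Rightarrow> real^'k \<Rightarrow> real^'k \<Rightarrow> real" where
  "EUBO M G y1 y2 = (\<integral>\<omega>. max (G \<omega> y1) (G \<omega> y2) \<partial>M)"

text \<open>W_lambda; maxima over Y written as suprema (attainment is assumed in the theorem).\<close>
definition W :: "'a measure \<Rightarrow> ('a \<Rightarrow> real^'k \<Rightarrow> real) \<Rightarrow> (real^'k) set \<Rightarrow> real \<Rightarrow> real^'k \<Rightarrow> real^'k \<Rightarrow> real" where
  "W M G Y lam y1 y2 =
     (\<Sum>i\<in>{i\<in>{1::nat,2}. P_resp M G lam y1 y2 i > 0}.
        P_resp M G lam y1 y2 i * (SUP y\<in>Y. post_mean M G lam y1 y2 i y))"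

definition V :: "'a measure \<Rightarrow> ('a \<Rightarrow> real^'k \<Rightarrow> real) \<Rightarrow> (real^'k) set \<Rightarrow> real \<Rightarrow> real^'k \<Rightarrow> real^'k \<Rightarrow> real" where
  "V M G Y lam y1 y2 = W M G Y lam y1 y2 - (SUP y\<in>Y. (\<integral>\<omega>. G \<omega> y \<partial>M))"

end

theory Submission
  imports Defs
begin

text \<open>Because the conditional posterior means attain their maximum on Y, the i-th summand of
  W_l(y1, y2) is the largest value of E[g(y) P(r = i | g)] over y \<in> Y. Hence
  W_0(y1, y2) \<le> E[max(g(a), g(b))] = EUBO(a, b) \<le> EUBO(y1*, y2*) for suitable a, b \<in> Y, while
  W_\<lambda>(y1*, y2*) is at least the probit mixture E[g(y1*) \<Phi>(d/s) + g(y2*) (1 - \<Phi>(d/s))] with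
  d = g(y1*) - g(y2*) and s = \<surd>2 \<lambda>. Pointwise this mixture falls short of the maximum by
  |d| \<Phi>(-|d|/s) \<le> |d| exp(-d^2/(2 s^2)) / 2 \<le> s exp(-1/2) / 2 = \<lambda> C.\<close>

lemma integrable_indicator_std_normal_density:
  "A \<in> sets borel \<Longrightarrow> integrable lborel (\<lambda>t. indicator A t * std_normal_density t)"
  using integrable_real_mult_indicator[of A lborel std_normal_density]
  by (simp add: mult.commute)

lemma Phi_nonneg: "0 \<le> Phi x"
  unfolding Phi_def by (intro integral_nonneg_AE) auto

lemma Phi_le_1: "Phi x \<le> 1"
proof -
  have "Phi x \<le> (\<integral>t. std_normal_density t \<partial>lborel)"
    unfolding Phi_def
    by (intro integral_mono integrable_indicator_std_normal_density) (auto simp: indicator_def)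
  then show ?thesis by simp
qed

lemma mono_Phi: "mono Phi"
proof
  fix x y :: real assume "x \<le> y"
  then show "Phi x \<le> Phi y"
    unfolding Phi_def
    by (intro integral_mono integrable_indicator_std_normal_density) (auto simp: indicator_def)
qed

lemma borel_measurable_Phi[measurable]: "Phi \<in> borel_measurable borel"
  by (rule borel_measurable_mono[OF mono_Phi])

lemma integral_std_normal_density_nonneg_half:
  "(\<integral>u. indicator {0..} u * std_normal_density u \<partial>lborel) = 1/2"
proof -
  have "(\<integral>u. indicator {0..} u * std_normal_density u \<partial>lborel)
     = \<bar>sqrt 2\<bar> *\<^sub>R (\<integral>x. indicator {0..} (0 + sqrt 2 * x) * std_normal_density (0 + sqrt 2 * x) \<partial>lborel)"
    by (rule lborel_integral_real_affine) simp
  also have "(\<lambda>x. indicator {0..} (0 + sqrt 2 * x) * std_normal_density (0 + sqrt 2 * x))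
      = (\<lambda>x. (1 / sqrt (2*pi)) * (indicator {0..} x *\<^sub>R exp (- x\<^sup>2)))"
    by (auto simp: std_normal_density_def indicator_def power_mult_distrib fun_eq_iff zero_le_mult_iff)
  also have "(\<integral>x. (1 / sqrt (2*pi)) * (indicator {0..} x *\<^sub>R exp (- x\<^sup>2)) \<partial>lborel)
      = (1 / sqrt (2*pi)) * (sqrt pi / 2)"
    using has_bochner_integral_integral_eq[OF gaussian_moment_0] by (simp add: field_simps)
  also have "\<bar>sqrt 2\<bar> *\<^sub>R ((1 / sqrt (2*pi)) * (sqrt pi / 2)) = 1/2"
    by (simp add: real_sqrt_mult)
  finally show ?thesis .
qed

text \<open>Shifting the tail to \<open>[0, \<infinity>)\<close> costs the factor exp(-t u) \<le> 1 in the density.\<close>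

lemma Phi_neg_le_exp: assumes t: "t \<ge> 0" shows "Phi (-t) \<le> exp (-t\<^sup>2/2) / 2"
proof -
  have "Phi (-t) = \<bar>-1\<bar> *\<^sub>R (\<integral>u. indicator {..-t} (-t + -1 * u) * std_normal_density (-t + -1 * u) \<partial>lborel)"
    unfolding Phi_def by (rule lborel_integral_real_affine) simp
  also have "\<dots> = (\<integral>u. indicator {0..} u * normal_density (-t) 1 u \<partial>lborel)"
    by (simp, rule Bochner_Integration.integral_cong)
       (auto simp: indicator_def normal_density_def power2_eq_square algebra_simps)
  also have "\<dots> \<le> (\<integral>u. exp (-t\<^sup>2/2) * (indicator {0..} u * std_normal_density u) \<partial>lborel)"
  proof (intro integral_mono)
    show "integrable lborel (\<lambda>u. indicator {0..} u * normal_density (-t) 1 u)"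
      using integrable_real_mult_indicator[of "{0..}" lborel "normal_density (-t) 1"]
      by (simp add: mult.commute)
    show "integrable lborel (\<lambda>u. exp (-t\<^sup>2/2) * (indicator {0..} u * std_normal_density u))"
      by (intro integrable_mult_right integrable_indicator_std_normal_density) auto
    fix u :: real
    show "indicator {0..} u * normal_density (-t) 1 u \<le> exp (-t\<^sup>2/2) * (indicator {0..} u * std_normal_density u)"
    proof (cases "u \<ge> 0")
      case True
      have sq: "(u - -t)\<^sup>2 = t\<^sup>2 + u\<^sup>2 + 2*(t*u)" by (simp add: power2_eq_square algebra_simps)
      have "exp (-(u - -t)\<^sup>2 / 2) \<le> exp (-t\<^sup>2/2) * exp (- u\<^sup>2 / 2)"
        unfolding exp_add[symmetric] exp_le_cancel_iff sq using mult_nonneg_nonneg[OF t True]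
        by (simp add: field_simps)
      then show ?thesis using True
        by (simp add: normal_density_def std_normal_density_def divide_right_mono)
    qed simp
  qed
  also have "\<dots> = exp (-t\<^sup>2/2) / 2" by (simp add: integral_std_normal_density_nonneg_half)
  finally show ?thesis .
qed

lemma one_minus_Phi_le_Phi_neg: "1 - Phi t \<le> Phi (-t)"
proof -
  have "1 - Phi t = (\<integral>x. std_normal_density x - indicator {..t} x * std_normal_density x \<partial>lborel)"
    unfolding Phi_def
    by (subst Bochner_Integration.integral_diff) (auto intro!: integrable_indicator_std_normal_density)
  also have "\<dots> = (\<integral>x. indicator {t<..} x * std_normal_density x \<partial>lborel)"
    by (rule Bochner_Integration.integral_cong) (auto simp: indicator_def)
  also have "\<dots> = \<bar>-1\<bar> *\<^sub>R (\<integral>x. indicator {t<..} (0 + -1 * x) * std_normal_density (0 + -1 * x) \<partial>lborel)"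
    by (rule lborel_integral_real_affine) simp
  also have "\<dots> \<le> Phi (-t)"
    unfolding Phi_def
  proof (simp, rule integral_mono)
    show "integrable lborel (\<lambda>x. indicator {t<..} (- x) * std_normal_density (- x))"
      using lborel_integrable_real_affine[OF integrable_indicator_std_normal_density[of "{t<..}"], of "-1" 0]
      by simp
    show "integrable lborel (\<lambda>x. indicator {..-t} x * std_normal_density x)"
      by (rule integrable_indicator_std_normal_density) simp
  qed (auto simp: indicator_def std_normal_density_def)
  finally show ?thesis .
qed

lemma mult_exp_neg_square_le: fixes t :: real shows "t * exp (-t\<^sup>2/2) \<le> exp (-1/2)"
proof (cases "t \<ge> 0")
  case True
  have "(1 + t\<^sup>2)/2 \<le> exp ((t\<^sup>2 - 1)/2)"
    using exp_ge_add_one_self[of "(t\<^sup>2 - 1)/2"] by (simp add: field_simps)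
  moreover have "t \<le> (1 + t\<^sup>2)/2"
    using sum_squares_ge_zero[of "t - 1" 0] by (simp add: power2_eq_square algebra_simps)
  ultimately have "t * exp (-t\<^sup>2/2) \<le> exp ((t\<^sup>2 - 1)/2) * exp (-t\<^sup>2/2)"
    by (intro mult_right_mono) auto
  also have "\<dots> = exp (-1/2)" unfolding exp_add[symmetric] by (simp add: field_simps)
  finally show ?thesis .
next
  case False
  then have "t * exp (-t\<^sup>2/2) \<le> 0" by (simp add: mult_nonpos_nonneg)
  then show ?thesis by (smt (verit) exp_gt_zero)
qed

lemma max_minus_probit_mixture_le:
  fixes a b s :: real
  assumes s: "s > 0"
  shows "max a b - (a * Phi ((a - b) / s) + b * (1 - Phi ((a - b) / s))) \<le> s * exp (-1/2) / 2"
proof -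
  have tail: "d * Phi (-(d / s)) \<le> s * exp (-1/2) / 2" if d: "d \<ge> 0" for d
  proof -
    have "d * Phi (-(d / s)) \<le> d * (exp (-(d / s)\<^sup>2/2) / 2)"
      using Phi_neg_le_exp[of "d / s"] d s by (intro mult_left_mono) auto
    also have "\<dots> = s * ((d / s) * exp (-(d / s)\<^sup>2/2)) / 2" using s by simp
    also have "\<dots> \<le> s * exp (-1/2) / 2"
      using mult_exp_neg_square_le[of "d / s"] s by (intro divide_right_mono mult_left_mono) auto
    finally show ?thesis .
  qed
  show ?thesis
  proof (cases "a \<ge> b")
    case True
    have "max a b - (a * Phi ((a - b) / s) + b * (1 - Phi ((a - b) / s))) = (a - b) * (1 - Phi ((a - b) / s))"
      using True by (simp add: algebra_simps)
    also have "\<dots> \<le> (a - b) * Phi (-((a - b) / s))"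
      using True one_minus_Phi_le_Phi_neg by (intro mult_left_mono) auto
    finally show ?thesis using tail[of "a - b"] True by linarith
  next
    case False
    have "max a b - (a * Phi ((a - b) / s) + b * (1 - Phi ((a - b) / s))) = (b - a) * Phi (-((b - a) / s))"
      using False by (simp add: algebra_simps minus_divide_left)
    then show ?thesis using tail[of "b - a"] False by linarith
  qed
qed

lemma convex_combination_le_max:
  fixes q x y :: real
  assumes "0 \<le> q" "q \<le> 1"
  shows "x * q + y * (1 - q) \<le> max x y"
proof -
  have "x * q + y * (1 - q) \<le> max x y * q + max x y * (1 - q)"
    using assms by (intro add_mono mult_right_mono) auto
  then show ?thesis by (simp add: algebra_simps)
qed

lemma gaussian_rv_integrable:
  assumes "prob_space M" "gaussian_rv M X m v"
  shows "integrable M X"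
proof (cases "v = 0")
  case True
  interpret prob_space M by fact
  have X: "X \<in> borel_measurable M" "AE \<omega> in M. X \<omega> = m"
    using assms(2) True unfolding gaussian_rv_def by simp_all
  show ?thesis
    by (rule integrable_cong_AE_imp[where g="\<lambda>_. m", OF _ X(1)]) (use X(2) in auto)
next
  case False
  then have v: "v > 0" and D: "distributed M lborel X (\<lambda>x. ennreal (normal_density m (sqrt v) x))"
    using assms(2) unfolding gaussian_rv_def by simp_all
  show ?thesis
    by (rule distributed_integrable_var[OF D]) (simp_all add: integrable_normal_moment_nz_1 v)
qed

lemma gaussian_process_integrable:
  fixes G :: "'a \<Rightarrow> real^'k \<Rightarrow> real"
  assumes "gaussian_process M G mu K"
  shows "integrable M (\<lambda>\<omega>. G \<omega> y)"
proof -
  have "prob_space M" and finite_sums: "\<And>S (c :: real^'k \<Rightarrow> real). finite S \<Longrightarrow>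
      gaussian_rv M (\<lambda>\<omega>. \<Sum>x\<in>S. c x * G \<omega> x) (\<Sum>x\<in>S. c x * mu x) (\<Sum>x\<in>S. \<Sum>x'\<in>S. c x * c x' * K x x')"
    using assms unfolding gaussian_process_def by simp_all
  then show ?thesis
    using finite_sums[of "{y}" "\<lambda>_. 1"] gaussian_rv_integrable by fastforce
qed

lemma integrable_mult_unit_interval:
  fixes f r :: "'a \<Rightarrow> real"
  assumes "integrable M f" "r \<in> borel_measurable M" "\<And>\<omega>. 0 \<le> r \<omega>" "\<And>\<omega>. r \<omega> \<le> 1"
  shows "integrable M (\<lambda>\<omega>. f \<omega> * r \<omega>)"
  by (rule Bochner_Integration.integrable_bound[OF assms(1)])
     (use assms borel_measurable_integrable[OF assms(1)] in
       \<open>auto simp: abs_mult intro!: mult_left_le borel_measurable_times\<close>)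

lemma integral_mult_eq_0_if_integral_weight_eq_0:
  fixes f r :: "'a \<Rightarrow> real"
  assumes "finite_measure M" "integrable M f"
    and r: "r \<in> borel_measurable M" "\<And>\<omega>. 0 \<le> r \<omega>" "\<And>\<omega>. r \<omega> \<le> 1"
    and "(\<integral>\<omega>. r \<omega> \<partial>M) = 0"
  shows "(\<integral>\<omega>. f \<omega> * r \<omega> \<partial>M) = 0"
proof -
  interpret finite_measure M by fact
  have "integrable M r" using r by (intro integrable_const_bound[where B=1]) auto
  then have "AE \<omega> in M. r \<omega> = 0" using integral_nonneg_eq_0_iff_AE assms r by auto
  then have "(\<integral>\<omega>. f \<omega> * r \<omega> \<partial>M) = (\<integral>\<omega>. 0 \<partial>M)"
    by (intro integral_cong_AE) (use r assms(2) in \<open>auto elim: AE_mp\<close>)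
  then show ?thesis by simp
qed

lemma resp_prob_properties:
  assumes "\<And>y. (\<lambda>\<omega>. G \<omega> y) \<in> borel_measurable M" and "l \<ge> 0"
  shows "resp_prob G l a b i \<in> borel_measurable M"
    and "0 \<le> resp_prob G l a b i \<omega>" and "resp_prob G l a b i \<omega> \<le> 1"
    and "resp_prob G l a b 2 \<omega> = 1 - resp_prob G l a b 1 \<omega>"
proof -
  have [measurable]: "(\<lambda>\<omega>. G \<omega> y) \<in> borel_measurable M" for y by (rule assms(1))
  show "resp_prob G l a b i \<in> borel_measurable M"
    unfolding resp_prob_def Let_def by (cases "l > 0"; cases "i = 1"; simp)
  show "0 \<le> resp_prob G l a b i \<omega>" "resp_prob G l a b i \<omega> \<le> 1"
    unfolding resp_prob_def Let_def using Phi_nonneg Phi_le_1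
    by (cases "l > 0"; cases "i = 1"; simp)+
  show "resp_prob G l a b 2 \<omega> = 1 - resp_prob G l a b 1 \<omega>"
    unfolding resp_prob_def Let_def by simp
qed

definition W_term ::
  "'a measure \<Rightarrow> ('a \<Rightarrow> real^'k \<Rightarrow> real) \<Rightarrow> (real^'k) set \<Rightarrow> real \<Rightarrow> real^'k \<Rightarrow> real^'k \<Rightarrow> nat \<Rightarrow> real"
where
  "W_term M G Y l a b i =
     (if P_resp M G l a b i > 0 then P_resp M G l a b i * (SUP y\<in>Y. post_mean M G l a b i y) else 0)"

lemma W_eq_W_term_sum: "W M G Y l a b = W_term M G Y l a b 1 + W_term M G Y l a b 2"
proof -
  have "W M G Y l a b = (\<Sum>i\<in>{1::nat,2}. W_term M G Y l a b i)"
    unfolding W_def W_term_def by (rule sum.inter_filter) simp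
  then show ?thesis by simp
qed

lemma W_term_is_max_weighted_integral:
  assumes "prob_space M" and G: "\<And>y. integrable M (\<lambda>\<omega>. G \<omega> y)" and "l \<ge> 0" and "Y \<noteq> {}"
    and attained: "P_resp M G l a b i > 0 \<Longrightarrow>
      \<exists>y\<in>Y. \<forall>y'\<in>Y. post_mean M G l a b i y' \<le> post_mean M G l a b i y"
  shows "\<exists>y0\<in>Y. W_term M G Y l a b i = (\<integral>\<omega>. G \<omega> y0 * resp_prob G l a b i \<omega> \<partial>M)
      \<and> (\<forall>y\<in>Y. (\<integral>\<omega>. G \<omega> y * resp_prob G l a b i \<omega> \<partial>M) \<le> W_term M G Y l a b i)"
proof -
  interpret prob_space M by fact
  let ?r = "resp_prob G l a b i" and ?P = "P_resp M G l a b i"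
  note r = resp_prob_properties[where G=G and M=M, OF borel_measurable_integrable[OF G] \<open>l \<ge> 0\<close>]
  show ?thesis
  proof (cases "?P > 0")
    case True
    then obtain y0 where y0: "y0 \<in> Y" "\<forall>y\<in>Y. post_mean M G l a b i y \<le> post_mean M G l a b i y0"
      using attained by blast
    then have "(SUP y\<in>Y. post_mean M G l a b i y) = post_mean M G l a b i y0"
      by (intro antisym cSUP_least cSUP_upper) (auto simp: bdd_above_def)
    moreover have "(\<integral>\<omega>. G \<omega> y * ?r \<omega> \<partial>M) = ?P * post_mean M G l a b i y" for y
      using True unfolding post_mean_def by simp
    ultimately show ?thesis
      using True y0 by (intro bexI[of _ y0]) (auto simp: W_term_def intro!: mult_left_mono)
  next
    case False
    have "?P \<ge> 0" unfolding P_resp_def using r by (intro integral_nonneg_AE) auto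
    with False have "(\<integral>\<omega>. ?r \<omega> \<partial>M) = 0" unfolding P_resp_def by simp
    then have "(\<integral>\<omega>. G \<omega> y * ?r \<omega> \<partial>M) = 0" for y
      using r
      by (intro integral_mult_eq_0_if_integral_weight_eq_0 G) (auto intro: finite_measure_axioms)
    then show ?thesis
      using False \<open>Y \<noteq> {}\<close> by (auto simp: W_term_def)
  qed
qed

lemma W_ge_mixture:
  assumes "prob_space M" and G: "\<And>y. integrable M (\<lambda>\<omega>. G \<omega> y)" and "l \<ge> 0"
    and "a \<in> Y" "b \<in> Y"
    and attained: "\<And>i. i \<in> {1, 2} \<Longrightarrow> P_resp M G l a b i > 0 \<Longrightarrow>
      \<exists>y\<in>Y. \<forall>y'\<in>Y. post_mean M G l a b i y' \<le> post_mean M G l a b i y"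
  shows "(\<integral>\<omega>. G \<omega> a * resp_prob G l a b 1 \<omega> + G \<omega> b * (1 - resp_prob G l a b 1 \<omega>) \<partial>M)
      \<le> W M G Y l a b"
proof -
  note r = resp_prob_properties[where G=G and M=M, OF borel_measurable_integrable[OF G] \<open>l \<ge> 0\<close>]
  have term_ge: "(\<integral>\<omega>. G \<omega> y * resp_prob G l a b i \<omega> \<partial>M) \<le> W_term M G Y l a b i"
    if "i \<in> {1, 2}" "y \<in> Y" for i y
    using W_term_is_max_weighted_integral[where M=M and G=G and Y=Y and a=a and b=b and i=i, OF assms(1-3)] attained[OF that(1)] that assms(4)
    by blast
  have "(\<integral>\<omega>. G \<omega> a * resp_prob G l a b 1 \<omega> + G \<omega> b * (1 - resp_prob G l a b 1 \<omega>) \<partial>M)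
      = (\<integral>\<omega>. G \<omega> a * resp_prob G l a b 1 \<omega> \<partial>M) + (\<integral>\<omega>. G \<omega> b * resp_prob G l a b 2 \<omega> \<partial>M)"
    unfolding r(4)[symmetric]
    by (intro Bochner_Integration.integral_add integrable_mult_unit_interval G r(1-3))
  also have "\<dots> \<le> W M G Y l a b"
    unfolding W_eq_W_term_sum using term_ge assms(4,5) by (intro add_mono) auto
  finally show ?thesis .
qed

lemma EUBO_le_mixture_add:
  assumes "prob_space M" and G: "\<And>y. integrable M (\<lambda>\<omega>. G \<omega> y)" and lam: "lam > 0"
  shows "EUBO M G a b \<le>
    (\<integral>\<omega>. G \<omega> a * resp_prob G lam a b 1 \<omega> + G \<omega> b * (1 - resp_prob G lam a b 1 \<omega>) \<partial>M)
      + lam * (exp (-1/2) / sqrt 2)"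
proof -
  interpret prob_space M by fact
  let ?r = "resp_prob G lam a b 1" and ?C = "lam * (exp (-1/2) / sqrt 2)"
  note r = resp_prob_properties[where G=G and M=M, OF borel_measurable_integrable[OF G] less_imp_le[OF lam]]
  have mixture: "integrable M (\<lambda>\<omega>. G \<omega> a * ?r \<omega> + G \<omega> b * (1 - ?r \<omega>))"
    unfolding r(4)[symmetric] by (intro Bochner_Integration.integrable_add integrable_mult_unit_interval G r(1-3))
  have gap: "max (G \<omega> a) (G \<omega> b) - (G \<omega> a * ?r \<omega> + G \<omega> b * (1 - ?r \<omega>)) \<le> ?C" for \<omega>
  proof -
    have "sqrt 2 * lam * exp (-1/2) / 2 = ?C" by (simp add: field_simps)
    then show ?thesis
      using max_minus_probit_mixture_le[of "sqrt 2 * lam" "G \<omega> a" "G \<omega> b"] lam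
      by (simp add: resp_prob_def)
  qed
  have "EUBO M G a b - (\<integral>\<omega>. G \<omega> a * ?r \<omega> + G \<omega> b * (1 - ?r \<omega>) \<partial>M)
      = (\<integral>\<omega>. max (G \<omega> a) (G \<omega> b) - (G \<omega> a * ?r \<omega> + G \<omega> b * (1 - ?r \<omega>)) \<partial>M)"
    unfolding EUBO_def by (rule Bochner_Integration.integral_diff[symmetric, OF _ mixture]) (auto intro!: G)
  also have "\<dots> \<le> (\<integral>\<omega>. ?C \<partial>M)"
    by (intro integral_mono gap Bochner_Integration.integrable_diff mixture) (auto intro!: G)
  also have "\<dots> = ?C" by (simp add: prob_space)
  finally show ?thesis by simp
qed

lemma W_le_EUBO:
  assumes "prob_space M" and G: "\<And>y. integrable M (\<lambda>\<omega>. G \<omega> y)" and "l \<ge> 0" and "Y \<noteq> {}"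
    and attained: "\<And>i. i \<in> {1, 2} \<Longrightarrow> P_resp M G l y1 y2 i > 0 \<Longrightarrow>
      \<exists>y\<in>Y. \<forall>y'\<in>Y. post_mean M G l y1 y2 i y' \<le> post_mean M G l y1 y2 i y"
  obtains a b where "a \<in> Y" "b \<in> Y" "W M G Y l y1 y2 \<le> EUBO M G a b"
proof -
  interpret prob_space M by fact
  let ?r = "resp_prob G l y1 y2"
  note r = resp_prob_properties[where G=G and M=M, OF borel_measurable_integrable[OF G] \<open>l \<ge> 0\<close>]
  have term_attained: "\<exists>y0\<in>Y. W_term M G Y l y1 y2 i = (\<integral>\<omega>. G \<omega> y0 * ?r i \<omega> \<partial>M)"
    if "i \<in> {1, 2}" for i
    using W_term_is_max_weighted_integral[where M=M and G=G and a=y1 and b=y2, OF assms(1-4)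
        attained[OF that]] by blast
  obtain a b where "a \<in> Y" "b \<in> Y"
    and a: "W_term M G Y l y1 y2 1 = (\<integral>\<omega>. G \<omega> a * ?r 1 \<omega> \<partial>M)"
    and b: "W_term M G Y l y1 y2 2 = (\<integral>\<omega>. G \<omega> b * ?r 2 \<omega> \<partial>M)"
    using term_attained[of 1] term_attained[of 2] by auto
  have "W M G Y l y1 y2 = (\<integral>\<omega>. G \<omega> a * ?r 1 \<omega> + G \<omega> b * ?r 2 \<omega> \<partial>M)"
    unfolding W_eq_W_term_sum a b
    by (rule Bochner_Integration.integral_add[symmetric];
        intro integrable_mult_unit_interval G r(1-3))
  also have "\<dots> \<le> EUBO M G a b"
    unfolding EUBO_def
  proof (rule integral_mono)
    show "integrable M (\<lambda>\<omega>. G \<omega> a * ?r 1 \<omega> + G \<omega> b * ?r 2 \<omega>)"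
      by (intro Bochner_Integration.integrable_add integrable_mult_unit_interval G r(1-3))
    show "integrable M (\<lambda>\<omega>. max (G \<omega> a) (G \<omega> b))"
      by (intro integrable_max G)
    show "G \<omega> a * ?r 1 \<omega> + G \<omega> b * ?r 2 \<omega> \<le> max (G \<omega> a) (G \<omega> b)" for \<omega>
      unfolding r(4) by (intro convex_combination_le_max r(2,3))
  qed
  finally show ?thesis using \<open>a \<in> Y\<close> \<open>b \<in> Y\<close> that by blast
qed

theorem theorem2:
  fixes M :: "'a measure" and G :: "'a \<Rightarrow> real^'k \<Rightarrow> real"
    and mu :: "real^'k \<Rightarrow> real" and K :: "real^'k \<Rightarrow> real^'k \<Rightarrow> real"
    and Y :: "(real^'k) set" and lam :: real and ys1 ys2 :: "real^'k"
  assumes GP: "gaussian_process M G mu K"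
    and cont_mu: "continuous_on UNIV mu"
    and cont_K: "continuous_on UNIV (\<lambda>y. K y y)"
    and Y_compact: "compact Y"
    and lam_pos: "lam > 0"
    and ys_in: "ys1 \<in> Y" "ys2 \<in> Y"
    and ys_argmax: "\<forall>y1\<in>Y. \<forall>y2\<in>Y. EUBO M G y1 y2 \<le> EUBO M G ys1 ys2"
    and prior_max_attained: "\<exists>y\<in>Y. \<forall>y'\<in>Y. (\<integral>\<omega>. G \<omega> y' \<partial>M) \<le> (\<integral>\<omega>. G \<omega> y \<partial>M)"
    and post_max_attained:
      "\<forall>l\<in>{0, lam}. \<forall>y1\<in>Y. \<forall>y2\<in>Y. \<forall>i\<in>{1::nat,2}. P_resp M G l y1 y2 i > 0 \<longrightarrow>
         (\<exists>y\<in>Y. \<forall>y'\<in>Y. post_mean M G l y1 y2 i y' \<le> post_mean M G l y1 y2 i y)"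
  shows "\<forall>y1\<in>Y. \<forall>y2\<in>Y.
           V M G Y lam ys1 ys2 \<ge> V M G Y 0 y1 y2 - lam * (exp (-1/2) / sqrt 2)"
proof (intro ballI)
  fix y1 y2 assume "y1 \<in> Y" "y2 \<in> Y"
  have M: "prob_space M" using GP by (simp add: gaussian_process_def)
  note G = gaussian_process_integrable[OF GP]
  have "Y \<noteq> {}" using ys_in by blast
  have attained: "\<exists>y\<in>Y. \<forall>y'\<in>Y. post_mean M G l a b i y' \<le> post_mean M G l a b i y"
    if "l \<in> {0, lam}" "a \<in> Y" "b \<in> Y" "i \<in> {1, 2}" "P_resp M G l a b i > 0" for l a b i
    using post_max_attained that by blast
  obtain a b where "a \<in> Y" "b \<in> Y" and W0: "W M G Y 0 y1 y2 \<le> EUBO M G a b"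
    using W_le_EUBO[where M=M and G=G, OF M G order.refl \<open>Y \<noteq> {}\<close>]
      attained[of 0 y1 y2] \<open>y1 \<in> Y\<close> \<open>y2 \<in> Y\<close> by blast
  have "EUBO M G a b \<le> EUBO M G ys1 ys2" using ys_argmax \<open>a \<in> Y\<close> \<open>b \<in> Y\<close> by blast
  moreover have "(\<integral>\<omega>. G \<omega> ys1 * resp_prob G lam ys1 ys2 1 \<omega>
      + G \<omega> ys2 * (1 - resp_prob G lam ys1 ys2 1 \<omega>) \<partial>M) \<le> W M G Y lam ys1 ys2"
    by (rule W_ge_mixture[where M=M and G=G, OF M G less_imp_le[OF lam_pos] ys_in])
       (simp add: attained ys_in)
  moreover note EUBO_le_mixture_add[where M=M and G=G and a=ys1 and b=ys2, OF M G lam_pos]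
  ultimately show "V M G Y lam ys1 ys2 \<ge> V M G Y 0 y1 y2 - lam * (exp (-1/2) / sqrt 2)"
    using W0 unfolding V_def by linarith
qed

end
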